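(* There exists an ultragraph $\mathcal G'$ (with no sinks) whose ultragraph shift space $X'$ is countable and contains a DC1 pair (for a suitable enumeration of the ultrapaths defining the metric); in particular $X'$ has a DC1 pair but no uncountable DC1 set (and is not Li–Yorke chaotic). Concretely, $\mathcal G'$ can be taken with vertices $\{v_n\}_{n\ge0}$, edges $\{e_n\}_{n\ge0}$, $s(e_n)=v_n$ for all $n\ge0$, $r(e_n)=\{v_{n+1}\}$ for $n\ge1$, and $r(e_0)=A$ where $A=\bigcup_{i\ge1}V_i$, $V_1=\{v_1,\dots,v_{k_1}\}$, $V_n=\{v_{t_n+1},\dots,v_{t_n+k_n}\}$ with $t_n=\sum_{i=1}^{n-1}(k_i+\ell_i)$ for $n>1$, for suitably chosen sequences of positive integers $(k_n)$, $(\ell_n)$; the DC1 pair is $(e_1e_2e_3\dots,\ A)$.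
   Context: An ultragraph $\mathcal G=(G^0,\mathcal G^1,r,s)$ consists of countable sets $G^0$ (vertices) and $\mathcal G^1$ (edges), a map $s:\mathcal G^1\to G^0$ and a map $r:\mathcal G^1\to P(G^0)\setminus\{\emptyset\}$. Standing assumption: $\mathcal G$ has no sinks, i.e. $s^{-1}(v)\neq\emptyset$ for every $v\in G^0$. $\mathcal G^0$ is the smallest subset of $P(G^0)$ containing $\{v\}$ for all $v\in G^0$ and $r(e)$ for all $e\in\mathcal G^1$, and closed under finite unions and nonempty finite intersections. A finite path is either an element of $\mathcal G^0$ (length $0$) or a sequence of edges $e_1\dots e_k$ with $s(e_{i+1})\in r(e_i)$ (length $k$); an infinite path is a sequence $e_1e_2\dots$ of edges with $s(e_{i+1})\in r(e_i)$ for all $i$, and $\mathfrak p^\infty$ is the set of infinite paths. The set of ultrapaths $\mathfrak p$ consists of all $A\in\mathcal G^0$ (length $0$) and all pairs $(\alpha,A)$ with $\alpha=e_1\dots e_k$ a finite path, $k\ge1$, $A\in\mathcal G^0$, $A\subseteq r(e_k)$ (length $k$). A set $A\in\mathcal G^0$ is an infinite emitter if $\{e\in\mathcal G^1:s(e)\in A\}$ is infinite, and a minimal infinite emitter if moreover no proper subset of $A$ belonging to $\mathcal G^0$ is an infinite emitter. The ultragraph shift space is $X=\mathfrak p^\infty\cup X_{fin}$, where $X_{fin}$ consists of all $(\alpha,A)\in\mathfrak p$ with $|\alpha|\ge1$ and $A$ a minimal infinite emitter contained in $r(\alpha)$, together with all minimal infinite emitters $A\in\mathcal G^0$. An ultrapath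 $p$ is an initial segment of $x\in X$ when: if $p=A\in\mathcal G^0$, then either $x$ has length $\ge1$ and its first edge has source in $A$, or $x=B\in\mathcal G^0$ with $B\subseteq A$; if $p=(\alpha,A)$ with $|\alpha|\ge1$, then the first $|\alpha|$ edges of $x$ form $\alpha$ and either $x$ has length $>|\alpha|$ and its $(|\alpha|+1)$-th edge has source in $A$, or $x=(\alpha,B)$ with $B\subseteq A$. Fix an enumeration $\mathfrak p=\{p_1,p_2,\dots\}$; the metric on $X$ is $d(x,x)=0$ and, for $x\neq y$, $d(x,y)=2^{-i}$ where $i$ is the least index such that $p_i$ is an initial segment of exactly one of $x,y$. The shift map $\sigma:X\to X$ is $\sigma(\gamma_1\gamma_2\dots)=\gamma_2\gamma_3\dots$, $\sigma((\gamma_1\dots\gamma_n,A))=(\gamma_2\dots\gamma_n,A)$ if $n>1$, $\sigma((\gamma_1,A))=A$, $\sigma(A)=A$. For $\delta>0$, $n\ge1$, $\Phi(n,\delta,x,y)=\frac{\#\{0\le k\le n: d(\sigma^k(x),\sigma^k(y))<\delta\}}{n}$. A pair $(x,y)$ is a DC1 pair if $\limsup_n\Phi(n,\delta,x,y)=1$ for all $\delta>0$ and $\liminf_n\Phi(n,\delta_0,x,y)=0$ for some $\delta_0>0$; a DC1 set is a set in which every pair of distinct points is a DC1 pair. A scrambled (Li–Yorke) pair satisfies $\liminf_n d(\sigma^n x,\sigma^n y)=0<\limsup_n d(\sigma^n x,\sigma^n y)$, and $X$ is Li–Yorke chaotic if it has an uncountable set all of whose distinct pairs are scrambled. *)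

theory Defs
  imports Complex_Main "HOL-Library.Liminf_Limsup" "HOL-Library.Countable_Set" "HOL-Library.Extended_Real"
begin

record ('v, 'e) ultragraph =
  verts :: "'v set"
  edges :: "'e set"
  rng   :: "'e \<Rightarrow> 'v set"
  src   :: "'e \<Rightarrow> 'v"

definition is_ultragraph :: "('v, 'e) ultragraph \<Rightarrow> bool" where
  "is_ultragraph G \<longleftrightarrow> countable (verts G) \<and> countable (edges G) \<and>
     (\<forall>e\<in>edges G. src G e \<in> verts G \<and> rng G e \<subseteq> verts G \<and> rng G e \<noteq> {})"

definition no_sinks :: "('v, 'e) ultragraph \<Rightarrow> bool" where
  "no_sinks G \<longleftrightarrow> (\<forall>v\<in>verts G. \<exists>e\<in>edges G. src G e = v)"

inductive_set G0 :: "('v, 'e) ultragraph \<Rightarrow> 'v set set" for G where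
  sing: "v \<in> verts G \<Longrightarrow> {v} \<in> G0 G"
| rng:  "e \<in> edges G \<Longrightarrow> rng G e \<in> G0 G"
| un:   "A \<in> G0 G \<Longrightarrow> B \<in> G0 G \<Longrightarrow> A \<union> B \<in> G0 G"
| int:  "A \<in> G0 G \<Longrightarrow> B \<in> G0 G \<Longrightarrow> A \<inter> B \<in> G0 G"

definition fin_path :: "('v, 'e) ultragraph \<Rightarrow> 'e list \<Rightarrow> bool" where
  "fin_path G \<alpha> \<longleftrightarrow> \<alpha> \<noteq> [] \<and> set \<alpha> \<subseteq> edges G \<and>
     (\<forall>i. Suc i < length \<alpha> \<longrightarrow> src G (\<alpha> ! Suc i) \<in> rng G (\<alpha> ! i))"

definition inf_path :: "('v, 'e) ultragraph \<Rightarrow> (nat \<Rightarrow> 'e) \<Rightarrow> bool" where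
  "inf_path G x \<longleftrightarrow> (\<forall>i. x i \<in> edges G) \<and> (\<forall>i. src G (x (Suc i)) \<in> rng G (x i))"

text \<open>Ultrapaths: \<open>UVert A\<close> (length 0) or \<open>UPath \<alpha> A\<close> with \<open>|\<alpha>| \<ge> 1\<close>.\<close>
datatype ('v, 'e) upath = UVert "'v set" | UPath "'e list" "'v set"

definition ultrapaths :: "('v, 'e) ultragraph \<Rightarrow> ('v, 'e) upath set" where
  "ultrapaths G = {UVert A | A. A \<in> G0 G} \<union>
     {UPath \<alpha> A | \<alpha> A. fin_path G \<alpha> \<and> A \<in> G0 G \<and> A \<subseteq> rng G (last \<alpha>)}"

definition inf_emitter :: "('v, 'e) ultragraph \<Rightarrow> 'v set \<Rightarrow> bool" where
  "inf_emitter G A \<longleftrightarrow> A \<in> G0 G \<and> infinite {e \<in> edges G. src G e \<in> A}"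

definition min_inf_emitter :: "('v, 'e) ultragraph \<Rightarrow> 'v set \<Rightarrow> bool" where
  "min_inf_emitter G A \<longleftrightarrow> inf_emitter G A \<and> (\<forall>B\<in>G0 G. B \<subset> A \<longrightarrow> \<not> inf_emitter G B)"

text \<open>Points of the shift space: infinite paths \<open>PInf x\<close>, and finite elements
  \<open>PFin \<alpha> A\<close>, where \<open>PFin [] A\<close> stands for the element \<open>A \<in> \<G>^0\<close> of length 0.\<close>
datatype ('v, 'e) point = PInf "nat \<Rightarrow> 'e" | PFin "'e list" "'v set"

definition shift_space :: "('v, 'e) ultragraph \<Rightarrow> ('v, 'e) point set" where
  "shift_space G = {PInf x | x. inf_path G x} \<union>
     {PFin \<alpha> A | \<alpha> A. fin_path G \<alpha> \<and> min_inf_emitter G A \<and> A \<subseteq> rng G (last \<alpha>)} \<union>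
     {PFin [] A | A. min_inf_emitter G A}"

fun has_edge :: "('v, 'e) point \<Rightarrow> nat \<Rightarrow> bool" where
  "has_edge (PInf x) i = True"
| "has_edge (PFin \<alpha> A) i = (i < length \<alpha>)"

fun edge_at :: "('v, 'e) point \<Rightarrow> nat \<Rightarrow> 'e" where
  "edge_at (PInf x) i = x i"
| "edge_at (PFin \<alpha> A) i = \<alpha> ! i"

text \<open>\<open>is_init G p x\<close>: the ultrapath \<open>p\<close> is an initial segment of \<open>x\<close> (edges indexed from 0).\<close>
fun is_init :: "('v, 'e) ultragraph \<Rightarrow> ('v, 'e) upath \<Rightarrow> ('v, 'e) point \<Rightarrow> bool" where
  "is_init G (UVert A) x \<longleftrightarrow>
     (has_edge x 0 \<and> src G (edge_at x 0) \<in> A) \<or> (\<exists>B. x = PFin [] B \<and> B \<subseteq> A)"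
| "is_init G (UPath \<alpha> A) x \<longleftrightarrow>
     (\<forall>i<length \<alpha>. has_edge x i \<and> edge_at x i = \<alpha> ! i) \<and>
     ((has_edge x (length \<alpha>) \<and> src G (edge_at x (length \<alpha>)) \<in> A) \<or> (\<exists>B. x = PFin \<alpha> B \<and> B \<subseteq> A))"

definition enumeration :: "('v, 'e) ultragraph \<Rightarrow> (nat \<Rightarrow> ('v, 'e) upath) \<Rightarrow> bool" where
  "enumeration G p \<longleftrightarrow> bij_betw p {1..} (ultrapaths G)"

definition udist :: "('v, 'e) ultragraph \<Rightarrow> (nat \<Rightarrow> ('v, 'e) upath) \<Rightarrow>
    ('v, 'e) point \<Rightarrow> ('v, 'e) point \<Rightarrow> real" where
  "udist G p x y = (if x = y then 0 else
     (1/2) ^ (LEAST i. 1 \<le> i \<and> is_init G (p i) x \<noteq> is_init G (p i) y))"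

fun ushift :: "('v, 'e) point \<Rightarrow> ('v, 'e) point" where
  "ushift (PInf x) = PInf (\<lambda>n. x (Suc n))"
| "ushift (PFin (a # \<alpha>) A) = PFin \<alpha> A"
| "ushift (PFin [] A) = PFin [] A"

definition Phi :: "('v, 'e) ultragraph \<Rightarrow> (nat \<Rightarrow> ('v, 'e) upath) \<Rightarrow> nat \<Rightarrow> real \<Rightarrow>
    ('v, 'e) point \<Rightarrow> ('v, 'e) point \<Rightarrow> real" where
  "Phi G p n \<delta> x y =
     real (card {k. k \<le> n \<and> udist G p ((ushift ^^ k) x) ((ushift ^^ k) y) < \<delta>}) / real n"

definition DC1_pair :: "('v, 'e) ultragraph \<Rightarrow> (nat \<Rightarrow> ('v, 'e) upath) \<Rightarrow>
    ('v, 'e) point \<Rightarrow> ('v, 'e) point \<Rightarrow> bool" where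
  "DC1_pair G p x y \<longleftrightarrow>
     (\<forall>\<delta>>0. limsup (\<lambda>n. ereal (Phi G p n \<delta> x y)) = 1) \<and>
     (\<exists>\<delta>0>0. liminf (\<lambda>n. ereal (Phi G p n \<delta>0 x y)) = 0)"

definition DC1_set :: "('v, 'e) ultragraph \<Rightarrow> (nat \<Rightarrow> ('v, 'e) upath) \<Rightarrow>
    ('v, 'e) point set \<Rightarrow> bool" where
  "DC1_set G p S \<longleftrightarrow> (\<forall>x\<in>S. \<forall>y\<in>S. x \<noteq> y \<longrightarrow> DC1_pair G p x y)"

definition scrambled_pair :: "('v, 'e) ultragraph \<Rightarrow> (nat \<Rightarrow> ('v, 'e) upath) \<Rightarrow>
    ('v, 'e) point \<Rightarrow> ('v, 'e) point \<Rightarrow> bool" where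
  "scrambled_pair G p x y \<longleftrightarrow>
     liminf (\<lambda>n. ereal (udist G p ((ushift ^^ n) x) ((ushift ^^ n) y))) = 0 \<and>
     0 < limsup (\<lambda>n. ereal (udist G p ((ushift ^^ n) x) ((ushift ^^ n) y)))"

definition li_yorke_chaotic :: "('v, 'e) ultragraph \<Rightarrow> (nat \<Rightarrow> ('v, 'e) upath) \<Rightarrow> bool" where
  "li_yorke_chaotic G p \<longleftrightarrow> (\<exists>S \<subseteq> shift_space G. uncountable S \<and>
     (\<forall>x\<in>S. \<forall>y\<in>S. x \<noteq> y \<longrightarrow> scrambled_pair G p x y))"

section \<open>The concrete ultragraph (vertex v_n = n, edge e_n = n)\<close>

definition tt :: "(nat \<Rightarrow> nat) \<Rightarrow> (nat \<Rightarrow> nat) \<Rightarrow> nat \<Rightarrow> nat" where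
  "tt k l n = (\<Sum>i\<in>{1..<n}. k i + l i)"

definition VV :: "(nat \<Rightarrow> nat) \<Rightarrow> (nat \<Rightarrow> nat) \<Rightarrow> nat \<Rightarrow> nat set" where
  "VV k l n = {tt k l n + 1 .. tt k l n + k n}"

definition AA :: "(nat \<Rightarrow> nat) \<Rightarrow> (nat \<Rightarrow> nat) \<Rightarrow> nat set" where
  "AA k l = (\<Union>n\<in>{1..}. VV k l n)"

definition exG :: "(nat \<Rightarrow> nat) \<Rightarrow> (nat \<Rightarrow> nat) \<Rightarrow> (nat, nat) ultragraph" where
  "exG k l = \<lparr> verts = UNIV, edges = UNIV,
              rng = (\<lambda>e. if e = 0 then AA k l else {Suc e}), src = (\<lambda>e. e) \<rparr>"

end

theory Submission
  imports Defs
begin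

text \<open>
  The \<open>k\<close>-th shift of \<open>e\<^sub>1e\<^sub>2e\<^sub>3\<dots>\<close> is \<open>e\<^bsub>k+1\<^esub>e\<^bsub>k+2\<^esub>\<dots>\<close>, while \<open>A\<close> is fixed by the shift.
  A single ultrapath tells these two points apart for only finitely many \<open>k\<close> with
  \<open>v\<^bsub>k+1\<^esub> \<in> A\<close>, whereas the ultrapath \<open>A\<close> tells them apart whenever \<open>v\<^bsub>k+1\<^esub> \<notin> A\<close>.
  So the orbits come arbitrarily close along \<open>S = {k. v\<^bsub>k+1\<^esub> \<in> A}\<close> and stay a fixed
  distance apart off \<open>S\<close>. Making every block \<open>V\<^sub>n\<close>, and every gap after it, \<open>n\<close> times
  longer than everything before it gives \<open>S\<close> upper density 1 and lower density 0, which is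
  exactly what a DC1 pair needs.

  The shift space is countable: every set in \<open>\<G>\<^sup>0\<close> is finite or \<open>A\<close> plus a finite set, so
  \<open>A\<close> is the only minimal infinite emitter, and an infinite path is determined by its first
  two edges.
\<close>

lemma limsup_ereal_eq_1I:
  fixes a :: "nat \<Rightarrow> real"
  assumes bounded: "\<And>n. a n \<le> real (Suc n) / real n"
    and frequently_large: "\<And>e M. e > 0 \<Longrightarrow> \<exists>m\<ge>M. 1 - e \<le> a m"
  shows "limsup (\<lambda>n. ereal (a n)) = 1"
proof (rule antisym)
  have "limsup (\<lambda>n. ereal (a n)) \<le> limsup (\<lambda>n. ereal (real (Suc n) / real n))"
    by (rule Limsup_mono) (use bounded in auto)
  also have "\<dots> = 1"
    using LIMSEQ_Suc_n_over_n[where 'a=real]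
    by (intro lim_imp_Limsup) (simp_all add: one_ereal_def tendsto_ereal)
  finally show "limsup (\<lambda>n. ereal (a n)) \<le> 1" .
next
  show "1 \<le> limsup (\<lambda>n. ereal (a n))"
  proof (rule ereal_le_epsilon2)
    fix e :: real assume "0 < e"
    have "ereal (1 - e) \<le> limsup (\<lambda>n. ereal (a n))"
      unfolding limsup_INF_SUP
    proof (rule INF_greatest)
      fix M :: nat
      obtain m where "m \<ge> M" "1 - e \<le> a m" using frequently_large \<open>0 < e\<close> by blast
      then show "ereal (1 - e) \<le> (SUP m\<in>{M..}. ereal (a m))"
        by (intro SUP_upper2[of m]) auto
    qed
    then show "1 \<le> limsup (\<lambda>n. ereal (a n)) + ereal e"
      by (cases "limsup (\<lambda>n. ereal (a n))") auto
  qed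
qed

lemma liminf_ereal_eq_0I:
  fixes a :: "nat \<Rightarrow> real"
  assumes nonneg: "\<And>n. 0 \<le> a n"
    and frequently_small: "\<And>e M. e > 0 \<Longrightarrow> \<exists>m\<ge>M. a m \<le> e"
  shows "liminf (\<lambda>n. ereal (a n)) = 0"
proof (rule antisym)
  show "liminf (\<lambda>n. ereal (a n)) \<le> 0"
  proof (rule ereal_le_epsilon2)
    fix e :: real assume "0 < e"
    have "liminf (\<lambda>n. ereal (a n)) \<le> ereal e"
      unfolding liminf_SUP_INF
    proof (rule SUP_least)
      fix M :: nat
      obtain m where "m \<ge> M" "a m \<le> e" using frequently_small \<open>0 < e\<close> by blast
      then show "(INF m\<in>{M..}. ereal (a m)) \<le> ereal e"
        by (intro INF_lower2[of m]) auto
    qed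
    then show "liminf (\<lambda>n. ereal (a n)) \<le> 0 + ereal e" by simp
  qed
next
  show "0 \<le> liminf (\<lambda>n. ereal (a n))"
    unfolding liminf_SUP_INF by (rule SUP_upper2[of 0]) (auto intro!: INF_greatest simp: nonneg)
qed

lemma frequently_dense_if_long_runs:
  fixes S :: "nat set"
  assumes runs: "\<And>n K. \<exists>a b. K \<le> a \<and> n * (a + 1) \<le> b \<and> {a..<b} \<subseteq> S"
    and "e > 0"
  shows "\<exists>m\<ge>K. (1 - e) * real m \<le> real (card {k. K \<le> k \<and> k \<le> m \<and> k \<in> S})"
proof -
  obtain n :: nat where n: "1 / e < n" using reals_Archimedean2 by blast
  then have "1 < n * e" using \<open>e > 0\<close> by (simp add: field_simps)
  then have "1 \<le> n" by (cases n) auto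
  obtain a b where ab: "K \<le> a" "n * (a + 1) \<le> b" "{a..<b} \<subseteq> S" using runs by blast
  have "a < b" using ab(2) \<open>1 \<le> n\<close> by (metis Suc_eq_plus1 Suc_le_lessD le_trans mult_1 mult_le_mono1)
  have "{a..<b} \<subseteq> {k. K \<le> k \<and> k \<le> b - 1 \<and> k \<in> S}" using ab by auto
  then have "b - a \<le> card {k. K \<le> k \<and> k \<le> b - 1 \<and> k \<in> S}"
    using card_mono[of "{k. K \<le> k \<and> k \<le> b - 1 \<and> k \<in> S}" "{a..<b}"] by simp
  moreover have "(1 - e) * real (b - 1) \<le> real (b - a)"
  proof -
    have "real (a + 1) \<le> real (a + 1) * (n * e)" using \<open>1 < n * e\<close> by simp
    also have "\<dots> = e * (real n * real (a + 1))" by simp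
    also have "\<dots> \<le> e * real b"
      using ab(2) \<open>e > 0\<close> by (intro mult_left_mono) (metis of_nat_le_iff of_nat_mult, simp)
    finally have "real a + 1 \<le> e * real b" by simp
    show ?thesis
    proof (cases "e \<le> 1")
      case True
      then show ?thesis using \<open>real a + 1 \<le> e * real b\<close> \<open>a < b\<close> by (simp add: algebra_simps)
    next
      case False
      then have "(1 - e) * real (b - 1) \<le> 0" by (intro mult_nonpos_nonneg) auto
      then show ?thesis by simp
    qed
  qed
  ultimately show ?thesis using ab(1) \<open>a < b\<close>
    by (intro exI[of _ "b - 1"]) (auto intro: order_trans)
qed

lemma frequently_sparse_if_long_gaps:
  fixes S :: "nat set"
  assumes gaps: "\<And>n K. \<exists>a b. K \<le> a \<and> n * (a + 1) \<le> b \<and> {a..<b} \<inter> S = {}"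
    and "e > 0"
  shows "\<exists>m\<ge>K. real (card {k. k \<le> m \<and> k \<in> S}) \<le> e * real m"
proof -
  obtain n :: nat where "1 / e < n" using reals_Archimedean2 by blast
  then have "1 < n * e" using \<open>e > 0\<close> by (simp add: field_simps)
  then have "1 \<le> n" by (cases n) auto
  obtain a b where ab: "K \<le> a" "n * (a + 1) \<le> b" "{a..<b} \<inter> S = {}" using gaps by blast
  have "a < b" using ab(2) \<open>1 \<le> n\<close> by (metis Suc_eq_plus1 Suc_le_lessD le_trans mult_1 mult_le_mono1)
  have "{k. k \<le> b - 1 \<and> k \<in> S} \<subseteq> {..<a}"
  proof
    fix k assume "k \<in> {k. k \<le> b - 1 \<and> k \<in> S}"
    then have k: "k \<le> b - 1" "k \<in> S" by auto
    then have "k \<notin> {a..<b}" using ab(3) by blast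
    then show "k \<in> {..<a}" using k(1) \<open>a < b\<close> by auto
  qed
  then have "card {k. k \<le> b - 1 \<and> k \<in> S} \<le> a"
    using card_mono[of "{..<a}"] by fastforce
  moreover have "real a \<le> e * real (b - 1)"
  proof -
    have "n * a \<le> b - 1" using ab(2) \<open>1 \<le> n\<close> by (simp add: algebra_simps)
    then have "real a * n \<le> real (b - 1)" by (metis mult.commute of_nat_le_iff of_nat_mult)
    then have "real a * (n * e) \<le> e * real (b - 1)" using \<open>e > 0\<close>
      by (metis mult.assoc mult.commute mult_left_mono less_imp_le)
    moreover have "real a \<le> real a * (n * e)"
      using \<open>1 < n * e\<close> by (metis less_imp_le mult.right_neutral mult_left_mono of_nat_0_le_iff)
    ultimately show ?thesis by linarith
  qed
  moreover have "K \<le> b - 1" using ab(1) \<open>a < b\<close> by linarith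
  ultimately show ?thesis by (intro exI[of _ "b - 1"]) auto
qed

lemma udist_ge_if_separates:
  assumes "1 \<le> j" "is_init G (p j) x \<noteq> is_init G (p j) y"
  shows "(1/2) ^ j \<le> udist G p x y"
proof -
  have "x \<noteq> y" using assms(2) by auto
  moreover have "(LEAST i. 1 \<le> i \<and> is_init G (p i) x \<noteq> is_init G (p i) y) \<le> j"
    using assms by (intro Least_le) simp
  ultimately show ?thesis unfolding udist_def by (simp add: power_decreasing)
qed

lemma udist_less_if_not_separated_below:
  assumes "\<exists>i\<ge>1. is_init G (p i) x \<noteq> is_init G (p i) y"
    and "\<forall>i\<in>{1..N}. is_init G (p i) x = is_init G (p i) y"
  shows "udist G p x y < (1/2) ^ N"
proof -
  define L where "L = (LEAST i. 1 \<le> i \<and> is_init G (p i) x \<noteq> is_init G (p i) y)"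
  have L: "1 \<le> L \<and> is_init G (p L) x \<noteq> is_init G (p L) y"
    unfolding L_def by (rule LeastI_ex) (use assms(1) in blast)
  then have "N < L" using assms(2) by (meson atLeastAtMost_iff not_le)
  moreover have "x \<noteq> y" using L by auto
  ultimately show ?thesis unfolding udist_def L_def[symmetric] by (simp add: power_strict_decreasing)
qed

lemma Phi_le_Suc_div: "Phi G p n \<delta> x y \<le> real (Suc n) / real n"
proof -
  have "card {k. k \<le> n \<and> udist G p ((ushift ^^ k) x) ((ushift ^^ k) y) < \<delta>} \<le> card {..n}"
    by (rule card_mono) auto
  then show ?thesis unfolding Phi_def by (simp add: divide_right_mono)
qed

lemma DC1_pairI:
  fixes S :: "nat set"
  assumes close: "\<And>\<delta>. \<delta> > 0 \<Longrightarrow>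
      \<exists>K. \<forall>k\<ge>K. k \<in> S \<longrightarrow> udist G p ((ushift ^^ k) x) ((ushift ^^ k) y) < \<delta>"
    and apart: "\<delta>\<^sub>0 > 0" "\<And>k. k \<notin> S \<Longrightarrow> \<delta>\<^sub>0 \<le> udist G p ((ushift ^^ k) x) ((ushift ^^ k) y)"
    and dense: "\<And>e K. e > 0 \<Longrightarrow> \<exists>m\<ge>K. (1 - e) * real m \<le> real (card {k. K \<le> k \<and> k \<le> m \<and> k \<in> S})"
    and sparse: "\<And>e K. e > 0 \<Longrightarrow> \<exists>m\<ge>K. real (card {k. k \<le> m \<and> k \<in> S}) \<le> e * real m"
  shows "DC1_pair G p x y"
  unfolding DC1_pair_def
proof (intro conjI allI impI exI)
  fix \<delta> :: real assume "\<delta> > 0"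
  then obtain K where K: "\<And>k. K \<le> k \<Longrightarrow> k \<in> S \<Longrightarrow> udist G p ((ushift ^^ k) x) ((ushift ^^ k) y) < \<delta>"
    using close by blast
  show "limsup (\<lambda>n. ereal (Phi G p n \<delta> x y)) = 1"
  proof (rule limsup_ereal_eq_1I[OF Phi_le_Suc_div])
    fix e :: real and M :: nat assume "e > 0"
    then obtain m where m: "m \<ge> max K (Suc M)"
      "(1 - e) * real m \<le> real (card {k. max K (Suc M) \<le> k \<and> k \<le> m \<and> k \<in> S})"
      using dense by blast
    have "card {k. max K (Suc M) \<le> k \<and> k \<le> m \<and> k \<in> S}
        \<le> card {k. k \<le> m \<and> udist G p ((ushift ^^ k) x) ((ushift ^^ k) y) < \<delta>}"
      by (rule card_mono) (auto intro: K)
    with m have "1 - e \<le> Phi G p m \<delta> x y"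
      unfolding Phi_def by (simp add: pos_le_divide_eq)
    then show "\<exists>m\<ge>M. 1 - e \<le> Phi G p m \<delta> x y" using m(1) by (intro exI[of _ m]) simp
  qed
next
  show "liminf (\<lambda>n. ereal (Phi G p n \<delta>\<^sub>0 x y)) = 0"
  proof (rule liminf_ereal_eq_0I)
    fix e :: real and M :: nat assume "e > 0"
    then obtain m where m: "m \<ge> M" "real (card {k. k \<le> m \<and> k \<in> S}) \<le> e * real m"
      using sparse by blast
    have "{k. k \<le> m \<and> udist G p ((ushift ^^ k) x) ((ushift ^^ k) y) < \<delta>\<^sub>0}
        \<subseteq> {k. k \<le> m \<and> k \<in> S}"
      using apart(2) by (auto simp flip: not_le)
    then have "card {k. k \<le> m \<and> udist G p ((ushift ^^ k) x) ((ushift ^^ k) y) < \<delta>\<^sub>0}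
        \<le> card {k. k \<le> m \<and> k \<in> S}"
      by (rule card_mono[rotated]) simp
    with m \<open>e > 0\<close> have "Phi G p m \<delta>\<^sub>0 x y \<le> e"
      unfolding Phi_def by (cases "m = 0") (simp_all add: divide_le_eq)
    then show "\<exists>m\<ge>M. Phi G p m \<delta>\<^sub>0 x y \<le> e" using m(1) by blast
  qed (simp add: Phi_def)
qed (use apart in simp)

lemma enumeration_exists:
  assumes "countable (ultrapaths G)" "infinite (ultrapaths G)"
  shows "\<exists>p. enumeration G p"
proof -
  have "bij_betw (\<lambda>i. i - 1) {1::nat..} UNIV"
    by (rule bij_betw_byWitness[of _ Suc]) auto
  then have "bij_betw (from_nat_into (ultrapaths G) \<circ> (\<lambda>i. i - 1)) {1..} (ultrapaths G)"
    using bij_betw_from_nat_into[OF assms] by (rule bij_betw_trans)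
  then show ?thesis unfolding enumeration_def by blast
qed

lemma enumeration_hits:
  "enumeration G p \<Longrightarrow> q \<in> ultrapaths G \<Longrightarrow> \<exists>i\<ge>1. p i = q"
  unfolding enumeration_def bij_betw_def by (metis atLeast_iff imageE)

lemma enumeration_in_ultrapaths:
  "enumeration G p \<Longrightarrow> 1 \<le> i \<Longrightarrow> p i \<in> ultrapaths G"
  unfolding enumeration_def bij_betw_def by auto

lemma funpow_ushift_PInf: "(ushift ^^ k) (PInf x) = PInf (\<lambda>i. x (i + k))"
  by (induction k) auto

lemma funpow_ushift_PFin_Nil: "(ushift ^^ k) (PFin [] A) = PFin [] A"
  by (induction k) auto

lemma exG_simps [simp]:
  "verts (exG k l) = UNIV" "edges (exG k l) = UNIV" "src (exG k l) e = e"
  "rng (exG k l) e = (if e = 0 then AA k l else {Suc e})"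
  by (simp_all add: exG_def)

lemma zero_notin_AA: "0 \<notin> AA k l"
  by (auto simp: AA_def VV_def)

lemma AA_in_G0: "AA k l \<in> G0 (exG k l)"
  using G0.rng[of 0 "exG k l"] by simp

lemma G0_exG_cases:
  assumes "B \<in> G0 (exG k l)"
  obtains "finite B" | F where "finite F" "B = AA k l \<union> F"
proof -
  have "finite B \<or> (\<exists>F. finite F \<and> B = AA k l \<union> F)"
    using assms
  proof (induction rule: G0.induct)
    case (un A B)
    then show ?case by (elim disjE exE conjE) (blast intro: finite_UnI)+
  next
    case (int A B)
    then show ?case by (elim disjE exE conjE) blast+
  qed auto
  with that show thesis by blast
qed

lemma countable_G0_exG: "countable (G0 (exG k l))"
proof (rule countable_subset)
  show "G0 (exG k l) \<subseteq> Collect finite \<union> (\<lambda>F. AA k l \<union> F) ` Collect finite"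
    by (blast elim: G0_exG_cases)
qed (use countable_Collect_finite in blast)

lemma min_inf_emitter_exG_iff:
  assumes "infinite (AA k l)"
  shows "min_inf_emitter (exG k l) A \<longleftrightarrow> A = AA k l"
proof -
  have inf_emitter: "inf_emitter (exG k l) B \<longleftrightarrow> B \<in> G0 (exG k l) \<and> infinite B" for B
    by (simp add: inf_emitter_def)
  have above_AA: "AA k l \<subseteq> B" if "inf_emitter (exG k l) B" for B
    using that unfolding inf_emitter by (auto elim: G0_exG_cases)
  have AA: "inf_emitter (exG k l) (AA k l)" using assms AA_in_G0 inf_emitter by blast
  show ?thesis
  proof
    assume "min_inf_emitter (exG k l) A"
    then have "inf_emitter (exG k l) A" "\<not> AA k l \<subset> A"
      using AA AA_in_G0 unfolding min_inf_emitter_def by blast+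
    then show "A = AA k l" using above_AA by blast
  next
    assume "A = AA k l"
    then show "min_inf_emitter (exG k l) A"
      using AA above_AA unfolding min_inf_emitter_def by blast
  qed
qed

lemma inf_path_exG_determined:
  assumes "inf_path (exG k l) x"
  shows "x (Suc i) = x 1 + i"
proof (induction i)
  case (Suc i)
  have "x (Suc i) \<in> rng (exG k l) (x i)" "x (Suc (Suc i)) \<in> rng (exG k l) (x (Suc i))"
    using assms by (simp_all add: inf_path_def)
  then have "x (Suc i) \<noteq> 0" "x (Suc (Suc i)) = Suc (x (Suc i))"
    using zero_notin_AA by (auto split: if_splits)
  then show ?case using Suc by simp
qed simp

lemma countable_inf_paths_exG: "countable {x. inf_path (exG k l) x}"
proof (rule countable_image_inj_on)
  show "countable ((\<lambda>x. (x 0, x 1)) ` {x. inf_path (exG k l) x})"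
    by (rule countable_subset[OF subset_UNIV]) simp
  show "inj_on (\<lambda>x. (x 0, x 1)) {x. inf_path (exG k l) x}"
  proof (rule inj_onI, rule ext)
    fix x y i assume "x \<in> {x. inf_path (exG k l) x}" "y \<in> {x. inf_path (exG k l) x}"
      and "(x 0, x 1) = (y 0, y 1)"
    then show "x i = y i" by (metis inf_path_exG_determined mem_Collect_eq not0_implies_Suc prod.inject)
  qed
qed

lemma countable_shift_space_exG: "countable (shift_space (exG k l))"
proof (rule countable_subset)
  have "PFin \<alpha> A \<in> case_prod PFin ` (UNIV \<times> G0 (exG k l))" if "A \<in> G0 (exG k l)" for \<alpha> A
    using that by (intro image_eqI[where x="(\<alpha>, A)"]) simp_all
  then show "shift_space (exG k l) \<subseteq>
      PInf ` {x. inf_path (exG k l) x} \<union> case_prod PFin ` (UNIV \<times> G0 (exG k l))"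
    unfolding shift_space_def min_inf_emitter_def inf_emitter_def by blast
  show "countable (PInf ` {x. inf_path (exG k l) x} \<union> case_prod PFin ` (UNIV \<times> G0 (exG k l)))"
    using countable_inf_paths_exG countable_G0_exG
    by (intro countable_Un countable_image countable_SIGMA) simp_all
qed

lemma countable_ultrapaths_exG: "countable (ultrapaths (exG k l))"
proof (rule countable_subset)
  have "UPath \<alpha> A \<in> case_prod UPath ` (UNIV \<times> G0 (exG k l))" if "A \<in> G0 (exG k l)" for \<alpha> A
    using that by (intro image_eqI[where x="(\<alpha>, A)"]) simp_all
  then show "ultrapaths (exG k l) \<subseteq> UVert ` G0 (exG k l) \<union> case_prod UPath ` (UNIV \<times> G0 (exG k l))"
    unfolding ultrapaths_def by blast
  show "countable (UVert ` G0 (exG k l) \<union> case_prod UPath ` ((UNIV :: nat list set) \<times> G0 (exG k l)))"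
    using countable_G0_exG by (intro countable_Un countable_image countable_SIGMA) simp_all
qed

lemma infinite_ultrapaths_exG: "infinite (ultrapaths (exG k l))"
proof
  assume "finite (ultrapaths (exG k l))"
  moreover have "range (\<lambda>v. UVert {v}) \<subseteq> ultrapaths (exG k l)"
    unfolding ultrapaths_def using G0.sing[of _ "exG k l"] by auto
  ultimately have "finite (range (\<lambda>v::nat. UVert {v} :: (nat, nat) upath))"
    by (rule finite_subset[rotated])
  moreover have "inj (\<lambda>v::nat. UVert {v} :: (nat, nat) upath)" by (simp add: inj_def)
  ultimately show False by (simp add: finite_image_iff)
qed

lemma finite_separated_times_exG:
  assumes "q \<in> ultrapaths (exG k l)"
  shows "finite {j. Suc j \<in> AA k l \<and>
    is_init (exG k l) q (PInf (\<lambda>i. Suc (i + j))) \<noteq> is_init (exG k l) q (PFin [] (AA k l))}"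
    (is "finite {j. Suc j \<in> AA k l \<and> ?sep j}")
proof (cases q)
  case (UVert B)
  have "{j. Suc j \<in> AA k l \<and> ?sep j} \<subseteq> {j. Suc j \<in> B}" using UVert by auto
  moreover have "{j. Suc j \<in> AA k l \<and> ?sep j} = {}" if "infinite B"
  proof -
    have "B \<in> G0 (exG k l)" using assms UVert by (simp add: ultrapaths_def)
    then have "AA k l \<subseteq> B" using that by (auto elim: G0_exG_cases)
    then show ?thesis using UVert by auto
  qed
  ultimately show ?thesis
    using finite_vimageI[of B Suc] by (cases "finite B") (auto simp: vimage_def intro: finite_subset)
next
  case (UPath \<alpha> B)
  then have "\<alpha> \<noteq> []" using assms by (simp add: ultrapaths_def fin_path_def)
  then have "{j. Suc j \<in> AA k l \<and> ?sep j} \<subseteq> {j. Suc j = \<alpha> ! 0}" using UPath by auto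
  moreover have "finite {j. Suc j = \<alpha> ! 0}" by (rule finite_subset[of _ "{\<alpha> ! 0 - 1}"]) auto
  ultimately show ?thesis by (rule finite_subset)
qed

lemma orbit_separated_exG:
  assumes "infinite (AA k l)" "enumeration (exG k l) p"
  shows "\<exists>i\<ge>1. is_init (exG k l) (p i) (PInf (\<lambda>i. Suc (i + j))) \<noteq>
    is_init (exG k l) (p i) (PFin [] (AA k l))"
proof -
  have "UVert {Suc j} \<in> ultrapaths (exG k l)"
    unfolding ultrapaths_def using G0.sing[of "Suc j" "exG k l"] by auto
  then obtain i where "i \<ge> 1" "p i = UVert {Suc j}" using enumeration_hits assms(2) by blast
  moreover have "\<not> AA k l \<subseteq> {Suc j}" using assms(1) finite_subset by blast
  then have "is_init (exG k l) (UVert {Suc j}) (PInf (\<lambda>i. Suc (i + j))) \<noteq>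
      is_init (exG k l) (UVert {Suc j}) (PFin [] (AA k l))"
    by simp
  ultimately show ?thesis by metis
qed

lemma orbit_close_exG:
  assumes AA: "infinite (AA k l)" and p: "enumeration (exG k l) p" and "\<delta> > 0"
  shows "\<exists>K. \<forall>j\<ge>K. Suc j \<in> AA k l \<longrightarrow>
    udist (exG k l) p (PInf (\<lambda>i. Suc (i + j))) (PFin [] (AA k l)) < \<delta>"
proof -
  obtain N where N: "(1/2) ^ N < \<delta>" using real_arch_pow_inv[of \<delta> "1/2"] \<open>\<delta> > 0\<close> by auto
  define F where "F = (\<Union>i\<in>{1..N}. {j. Suc j \<in> AA k l \<and>
    is_init (exG k l) (p i) (PInf (\<lambda>i. Suc (i + j))) \<noteq> is_init (exG k l) (p i) (PFin [] (AA k l))})"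
  have "finite F"
    unfolding F_def using finite_separated_times_exG enumeration_in_ultrapaths[OF p] by auto
  then obtain K where K: "F \<subseteq> {..<K}" using finite_nat_bounded by blast
  have "udist (exG k l) p (PInf (\<lambda>i. Suc (i + j))) (PFin [] (AA k l)) < (1/2) ^ N"
    if "K \<le> j" "Suc j \<in> AA k l" for j
  proof (rule udist_less_if_not_separated_below)
    show "\<forall>i\<in>{1..N}. is_init (exG k l) (p i) (PInf (\<lambda>i. Suc (i + j))) =
        is_init (exG k l) (p i) (PFin [] (AA k l))"
      using K that unfolding F_def by fastforce
  qed (rule orbit_separated_exG[OF AA p])
  then show ?thesis using N by (meson less_trans)
qed

lemma DC1_pair_exG:
  assumes AA: "infinite (AA k l)" and p: "enumeration (exG k l) p"
    and runs: "\<And>n K. \<exists>a b. K \<le> a \<and> n * (a + 1) \<le> b \<and> {a..<b} \<subseteq> {j. Suc j \<in> AA k l}"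
    and gaps: "\<And>n K. \<exists>a b. K \<le> a \<and> n * (a + 1) \<le> b \<and> {a..<b} \<inter> {j. Suc j \<in> AA k l} = {}"
  shows "DC1_pair (exG k l) p (PInf Suc) (PFin [] (AA k l))"
proof -
  obtain j0 where j0: "j0 \<ge> 1" "p j0 = UVert (AA k l)"
    using enumeration_hits[OF p] AA_in_G0 unfolding ultrapaths_def by blast
  show ?thesis
  proof (rule DC1_pairI[where S = "{j. Suc j \<in> AA k l}" and \<delta>\<^sub>0 = "(1/2) ^ j0"],
      unfold funpow_ushift_PInf funpow_ushift_PFin_Nil mem_Collect_eq)
    show "\<exists>K. \<forall>j\<ge>K. Suc j \<in> AA k l \<longrightarrow>
        udist (exG k l) p (PInf (\<lambda>i. Suc (i + j))) (PFin [] (AA k l)) < \<delta>" if "\<delta> > 0" for \<delta>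
      using orbit_close_exG[OF AA p that] .
    show "(1/2) ^ j0 > (0::real)" by simp
    show "(1/2) ^ j0 \<le> udist (exG k l) p (PInf (\<lambda>i. Suc (i + j))) (PFin [] (AA k l))"
      if "Suc j \<notin> AA k l" for j
      using that j0 by (intro udist_ge_if_separates[of j0]) auto
  qed (use frequently_dense_if_long_runs[OF runs] frequently_sparse_if_long_gaps[OF gaps] in simp_all)
qed

text \<open>Block \<open>V\<^sub>n\<close> occupies \<open>block_start n < v \<le> block_start n + block_len n\<close>; each block and each
  following gap is \<open>n\<close> times longer than everything before it.\<close>

fun block_start :: "nat \<Rightarrow> nat" where
  "block_start 0 = 0"
| "block_start (Suc n) = (let t = block_start n; k = n * (t + 1) in t + k + n * (t + k + 1))"

definition block_len :: "nat \<Rightarrow> nat" where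
  "block_len n = n * (block_start n + 1)"

definition gap_len :: "nat \<Rightarrow> nat" where
  "gap_len n = n * (block_start n + block_len n + 1)"

lemma block_start_Suc: "block_start (Suc n) = block_start n + block_len n + gap_len n"
  by (simp add: block_len_def gap_len_def Let_def)

declare block_start.simps(2) [simp del]

lemma tt_eq_block_start: "tt block_len gap_len n = block_start n"
proof (induction n)
  case (Suc n)
  have "tt block_len gap_len (Suc n) = tt block_len gap_len n + block_len n + gap_len n"
    by (cases n) (simp_all add: tt_def block_len_def gap_len_def)
  then show ?case using Suc by (simp add: block_start_Suc)
qed (simp add: tt_def)

lemma mono_block_start: "mono block_start"
  by (rule mono_iff_le_Suc[THEN iffD2]) (simp add: block_start_Suc)

lemma le_block_start: "n \<le> block_start n + 1"
  by (induction n) (auto simp: block_start_Suc block_len_def)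

lemma block_end_le_block_start:
  assumes "i < n"
  shows "block_start i + block_len i \<le> block_start n"
proof -
  have "block_start i + block_len i \<le> block_start (Suc i)" by (simp add: block_start_Suc)
  also have "\<dots> \<le> block_start n" using assms mono_block_start by (simp add: monoD)
  finally show ?thesis .
qed

lemma mem_AA_blocks_iff:
  "v \<in> AA block_len gap_len \<longleftrightarrow> (\<exists>n\<ge>1. block_start n < v \<and> v \<le> block_start n + block_len n)"
  unfolding AA_def VV_def tt_eq_block_start by (auto simp: Suc_le_eq)

lemma long_runs_AA_blocks:
  "\<exists>a b. K \<le> a \<and> n * (a + 1) \<le> b \<and> {a..<b} \<subseteq> {j. Suc j \<in> AA block_len gap_len}"
proof (intro exI conjI)
  define m where "m = max n (Suc K)"
  show "K \<le> block_start m" using le_block_start[of m] by (simp add: m_def)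
  have "n * (block_start m + 1) \<le> block_len m"
    unfolding block_len_def m_def by (rule mult_le_mono1) simp
  then show "n * (block_start m + 1) \<le> block_start m + block_len m" by simp
  show "{block_start m..<block_start m + block_len m} \<subseteq> {j. Suc j \<in> AA block_len gap_len}"
    unfolding mem_AA_blocks_iff by (auto simp: m_def intro!: exI[of _ m])
qed

lemma long_gaps_AA_blocks:
  "\<exists>a b. K \<le> a \<and> n * (a + 1) \<le> b \<and> {a..<b} \<inter> {j. Suc j \<in> AA block_len gap_len} = {}"
proof (intro exI conjI)
  define m where "m = max n (Suc K)"
  show "K \<le> block_start m + block_len m" using le_block_start[of m] by (simp add: m_def)
  have "n * (block_start m + block_len m + 1) \<le> gap_len m"
    unfolding gap_len_def m_def by (rule mult_le_mono1) simp
  then show "n * (block_start m + block_len m + 1) \<le> block_start (Suc m)"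
    by (simp add: block_start_Suc)
  show "{block_start m + block_len m..<block_start (Suc m)} \<inter> {j. Suc j \<in> AA block_len gap_len} = {}"
  proof (intro equalityI subsetI, elim IntE)
    fix j assume j: "j \<in> {block_start m + block_len m..<block_start (Suc m)}"
      and "j \<in> {j. Suc j \<in> AA block_len gap_len}"
    then obtain i where i: "block_start i < Suc j" "Suc j \<le> block_start i + block_len i"
      unfolding mem_AA_blocks_iff by auto
    show "j \<in> {}"
    proof (cases "i \<le> m")
      case True
      then have "block_start i + block_len i \<le> block_start m + block_len m"
        using block_end_le_block_start[of i m] by (cases "i = m") auto
      then show ?thesis using i j by simp
    next
      case False
      then have "block_start (Suc m) \<le> block_start i" using mono_block_start by (simp add: monoD)
      then show ?thesis using i j by simp
    qed
  qed simp
qed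

lemma infinite_AA_blocks: "infinite (AA block_len gap_len)"
  unfolding infinite_nat_iff_unbounded_le
proof
  fix K
  obtain a b where "K \<le> a" "a + 1 \<le> b" "{a..<b} \<subseteq> {j. Suc j \<in> AA block_len gap_len}"
    using long_runs_AA_blocks[of K 1] by auto
  moreover have "a \<in> {a..<b}" using \<open>a + 1 \<le> b\<close> by simp
  ultimately have "Suc a \<in> AA block_len gap_len" by blast
  then show "\<exists>v\<ge>K. v \<in> AA block_len gap_len" using \<open>K \<le> a\<close> le_SucI by blast
qed

theorem mainTheorem10:
  shows "\<exists>k l :: nat \<Rightarrow> nat. (\<forall>n\<ge>1. 0 < k n \<and> 0 < l n) \<and>
     is_ultragraph (exG k l) \<and> no_sinks (exG k l) \<and>
     countable (shift_space (exG k l)) \<and>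
     (\<exists>p. enumeration (exG k l) p \<and>
        PInf Suc \<in> shift_space (exG k l) \<and> PFin [] (AA k l) \<in> shift_space (exG k l) \<and>
        DC1_pair (exG k l) p (PInf Suc) (PFin [] (AA k l)) \<and>
        (\<forall>S \<subseteq> shift_space (exG k l). DC1_set (exG k l) p S \<longrightarrow> countable S) \<and>
        \<not> li_yorke_chaotic (exG k l) p)"
proof -
  let ?G = "exG block_len gap_len"
  obtain p where p: "enumeration ?G p"
    using enumeration_exists countable_ultrapaths_exG infinite_ultrapaths_exG by blast
  have countable: "countable (shift_space ?G)" by (rule countable_shift_space_exG)
  show ?thesis
  proof (intro exI conjI allI impI)
    show "0 < block_len n" "0 < gap_len n" if "1 \<le> n" for n
      using that by (simp_all add: block_len_def gap_len_def)
    show "is_ultragraph ?G" using infinite_AA_blocks by (auto simp: is_ultragraph_def)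
    show "PInf Suc \<in> shift_space ?G" by (simp add: shift_space_def inf_path_def)
    show "PFin [] (AA block_len gap_len) \<in> shift_space ?G"
      using min_inf_emitter_exG_iff[OF infinite_AA_blocks] by (simp add: shift_space_def)
    show "DC1_pair ?G p (PInf Suc) (PFin [] (AA block_len gap_len))"
      using DC1_pair_exG[OF infinite_AA_blocks p long_runs_AA_blocks long_gaps_AA_blocks] .
    show "no_sinks ?G" by (simp add: no_sinks_def)
    show "countable (shift_space ?G)" "enumeration ?G p" by (fact countable p)+
    show "countable S" if "S \<subseteq> shift_space ?G" for S using that countable by (rule countable_subset)
    show "\<not> li_yorke_chaotic ?G p"
      using countable countable_subset by (auto simp: li_yorke_chaotic_def)
  qed
qed

end
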